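(* Let $f(x)$ be a real polynomial of degree $3$ with three distinct real roots $x_1,x_2,x_3$, and let $k_1,k_2,k_3$ be the vertical lines $x=x_1$, $x=x_2$, $x=x_3$ in the coordinate plane. Then there exists an equilateral triangle $A_1A_2A_3$ with $A_i\in k_i$ for $i=1,2,3$. Moreover, for any such equilateral triangle, with inscribed circle $\omega$, the two vertical lines tangent to $\omega$ are exactly the lines $x=c$ where $c$ ranges over the two critical points (local extrema) of $f$, and the vertical line through the center of $\omega$ is the line $x=c_0$ where $c_0$ is the inflection point of $f$ (the root of $f''$).
   Context: Work in the real coordinate plane; "vertical" means parallel to the ordinate axis. *)

theory Defs
  imports "HOL-Analysis.Analysis" "HOL-Computational_Algebra.Polynomial"
begin

text \<open>Points of the real plane are pairs (x, y); dist on real \<times> real is Euclidean.\<close>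

type_synonym point = "real \<times> real"

definition vline :: "real \<Rightarrow> point set" where
  "vline c = {p. fst p = c}"

definition equilateral :: "point \<Rightarrow> point \<Rightarrow> point \<Rightarrow> bool" where
  "equilateral A B C \<longleftrightarrow> A \<noteq> B \<and> dist A B = dist B C \<and> dist B C = dist C A"

definition tri_area :: "point \<Rightarrow> point \<Rightarrow> point \<Rightarrow> real" where
  "tri_area A B C = \<bar>(fst B - fst A) * (snd C - snd A) - (fst C - fst A) * (snd B - snd A)\<bar> / 2"

definition incenter :: "point \<Rightarrow> point \<Rightarrow> point \<Rightarrow> point" where
  "incenter A B C = (1 / (dist B C + dist C A + dist A B)) *\<^sub>R
     (dist B C *\<^sub>R A + dist C A *\<^sub>R B + dist A B *\<^sub>R C)"

definition inradius :: "point \<Rightarrow> point \<Rightarrow> point \<Rightarrow> real" where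
  "inradius A B C = 2 * tri_area A B C / (dist B C + dist C A + dist A B)"

definition incircle :: "point \<Rightarrow> point \<Rightarrow> point \<Rightarrow> point set" where
  "incircle A B C = sphere (incenter A B C) (inradius A B C)"

definition tangent_line :: "point set \<Rightarrow> point set \<Rightarrow> bool" where
  "tangent_line L S \<longleftrightarrow> (\<exists>!p. p \<in> L \<and> p \<in> S)"

end

theory Submission
  imports Defs
begin

text \<open>
  Write \<open>m = (x1 + x2 + x3) / 3\<close> and \<open>Q = (x1 - x2)\<^sup>2 + (x2 - x3)\<^sup>2 + (x3 - x1)\<^sup>2\<close>.
  Since \<open>f = k (x - x1)(x - x2)(x - x3)\<close>, we get \<open>f' x = 3k ((x - m)\<^sup>2 - Q / 18)\<close> and
  \<open>f'' x = 6k (x - m)\<close>. In an equilateral triangle of side \<open>L\<close> the incenter is the centroid,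
  whose abscissa is \<open>m\<close> when the vertices lie on the lines \<open>x = xi\<close>, and the inradius is
  \<open>L / (2 sqrt 3)\<close>. Projecting the three sides onto the abscissa gives \<open>Q = 3 L\<^sup>2 / 2\<close>, so the
  squared inradius is \<open>Q / 18\<close>: the vertical tangents \<open>x = m \<plusminus> r\<close> are exactly the zeros of \<open>f'\<close>.
\<close>

lemma cubic_eq_smult_linear_factors:
  fixes f :: "'a::idom poly"
  assumes "degree f = 3" and "x1 \<noteq> x2" "x1 \<noteq> x3" "x2 \<noteq> x3"
    and "poly f x1 = 0" "poly f x2 = 0" "poly f x3 = 0"
  obtains k where "k \<noteq> 0" "f = smult k ([:-x1, 1:] * [:-x2, 1:] * [:-x3, 1:])"
proof -
  obtain g where g: "f = [:-x1, 1:] * g"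
    using assms(5) by (auto simp: poly_eq_0_iff_dvd)
  have "poly g x2 = 0" "poly g x3 = 0"
    using g assms(2-7) by auto
  then obtain h where h: "g = [:-x2, 1:] * h"
    by (auto simp: poly_eq_0_iff_dvd)
  have "poly h x3 = 0"
    using h \<open>poly g x3 = 0\<close> assms(4) by auto
  then obtain q where q: "h = [:-x3, 1:] * q"
    by (auto simp: poly_eq_0_iff_dvd)
  have f_eq: "f = [:-x1, 1:] * [:-x2, 1:] * [:-x3, 1:] * q"
    by (simp only: g h q mult.assoc)
  have "f \<noteq> 0"
    using assms(1) by auto
  then have "q \<noteq> 0"
    using f_eq by auto
  then have "degree f = 3 + degree q"
    unfolding f_eq by (simp add: degree_mult_eq del: mult_pCons_left mult_pCons_right)
  then have "degree q = 0"
    using assms(1) by simp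
  then obtain k where "q = [:k:]"
    by (rule degree_eq_zeroE)
  then show thesis
    using that f_eq \<open>q \<noteq> 0\<close> by (simp add: mult.commute)
qed

lemma poly_pderiv_cubic:
  fixes k x x1 x2 x3 :: real
  defines "f \<equiv> smult k ([:-x1, 1:] * [:-x2, 1:] * [:-x3, 1:])"
  shows "poly (pderiv f) x =
           3 * k * ((x - (x1 + x2 + x3) / 3)^2 - ((x1 - x2)^2 + (x2 - x3)^2 + (x3 - x1)^2) / 18)"
    and "poly (pderiv (pderiv f)) x = 6 * k * (x - (x1 + x2 + x3) / 3)"
  unfolding f_def
  by (simp_all add: pderiv_mult pderiv_smult pderiv_pCons field_simps power2_eq_square)

lemma cubic_roots_pderiv_eq_0_iff:
  fixes f :: "real poly"
  assumes "degree f = 3" and "x1 \<noteq> x2" "x1 \<noteq> x3" "x2 \<noteq> x3"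
    and "poly f x1 = 0" "poly f x2 = 0" "poly f x3 = 0"
  shows "poly (pderiv f) c = 0 \<longleftrightarrow>
           (c - (x1 + x2 + x3) / 3)^2 = ((x1 - x2)^2 + (x2 - x3)^2 + (x3 - x1)^2) / 18"
    and "poly (pderiv (pderiv f)) c = 0 \<longleftrightarrow> c = (x1 + x2 + x3) / 3"
proof -
  obtain k where "k \<noteq> 0" and f: "f = smult k ([:-x1, 1:] * [:-x2, 1:] * [:-x3, 1:])"
    using cubic_eq_smult_linear_factors[OF assms] by blast
  then show "poly (pderiv f) c = 0 \<longleftrightarrow>
           (c - (x1 + x2 + x3) / 3)^2 = ((x1 - x2)^2 + (x2 - x3)^2 + (x3 - x1)^2) / 18"
    and "poly (pderiv (pderiv f)) c = 0 \<longleftrightarrow> c = (x1 + x2 + x3) / 3"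
    unfolding f poly_pderiv_cubic by simp_all
qed

lemma dist_point_sq: "dist A B ^ 2 = (fst A - fst B)^2 + (snd A - snd B)^2"
  for A B :: point
  by (cases A; cases B) (simp add: dist_Pair_Pair dist_real_def)

lemma heron_tri_area:
  "16 * tri_area A B C ^ 2 =
     2 * (dist B C ^ 2 * dist C A ^ 2 + dist C A ^ 2 * dist A B ^ 2 + dist A B ^ 2 * dist B C ^ 2)
     - ((dist B C ^ 2)^2 + (dist C A ^ 2)^2 + (dist A B ^ 2)^2)"
  unfolding tri_area_def dist_point_sq power_divide power2_abs by algebra

lemma equilateral_dist:
  assumes "equilateral A B C"
  shows "dist B C = dist A B" "dist C A = dist A B" "dist A B > 0"
  using assms unfolding equilateral_def by auto

lemma incenter_equilateral:
  assumes "equilateral A B C"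
  shows "incenter A B C = (1 / 3) *\<^sub>R (A + B + C)"
  using equilateral_dist[OF assms]
  by (simp add: incenter_def scaleR_add_right[symmetric])

lemma inradius_equilateral:
  assumes "equilateral A B C"
  shows "inradius A B C ^ 2 = dist A B ^ 2 / 12"
proof -
  define L where "L = dist A B"
  have L: "dist B C = L" "dist C A = L" "L > 0"
    using equilateral_dist[OF assms] unfolding L_def by auto
  have "16 * tri_area A B C ^ 2 = 3 * L ^ 4"
    using heron_tri_area[of A B C] unfolding L L_def[symmetric] by algebra
  then show ?thesis
    using L(3) unfolding inradius_def L L_def[symmetric]
    by (simp add: field_simps power4_eq_xxxx power2_eq_square)
qed

lemma equilateral_fst_diff_sq_sum:
  assumes "equilateral A B C"
  shows "(fst A - fst B)^2 + (fst B - fst C)^2 + (fst C - fst A)^2 = 3 / 2 * dist A B ^ 2"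
proof -
  define a b c d where "a = fst B - fst A" "b = snd B - snd A" "c = fst C - fst A" "d = snd C - snd A"
  define L2 where "L2 = dist A B ^ 2"
  have sides: "a^2 + b^2 = L2" "c^2 + d^2 = L2" "(a - c)^2 + (b - d)^2 = L2"
  proof -
    have "dist A B ^ 2 = L2" "dist A C ^ 2 = L2" "dist B C ^ 2 = L2"
      using equilateral_dist[OF assms] by (simp_all add: L2_def dist_commute)
    then show "a^2 + b^2 = L2" "c^2 + d^2 = L2" "(a - c)^2 + (b - d)^2 = L2"
      unfolding dist_point_sq a_b_c_d_def by (simp_all add: power2_commute)
  qed
  have "(a - c)^2 + (b - d)^2 = (a^2 + b^2) + (c^2 + d^2) - 2 * (a * c + b * d)"
    by algebra
  then have bd: "b * d = L2 / 2 - a * c"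
    using sides by simp
  have b2: "b^2 = L2 - a^2" and d2: "d^2 = L2 - c^2"
    using sides by simp_all
  \<comment> \<open>Squaring \<open>bd\<close> eliminates the ordinates.\<close>
  have "(L2 / 2 - a * c)^2 = (L2 - a^2) * (L2 - c^2)"
    unfolding bd[symmetric] b2[symmetric] d2[symmetric] by (simp add: power_mult_distrib)
  then have "L2 * (4 * (a^2 + c^2 - a * c)) = L2 * (3 * L2)"
    by (simp add: algebra_simps power2_eq_square)
  moreover have "L2 > 0"
    using equilateral_dist[OF assms] unfolding L2_def by simp
  ultimately have "4 * (a^2 + c^2 - a * c) = 3 * L2"
    by simp
  then show ?thesis
    unfolding a_b_c_d_def L2_def[symmetric] by (simp add: algebra_simps power2_eq_square)
qed

lemma tangent_vline_sphere_iff: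
  assumes "0 \<le> r"
  shows "tangent_line (vline c) (sphere g r) \<longleftrightarrow> \<bar>c - fst g\<bar> = r"
proof -
  have on_circle: "p \<in> vline c \<and> p \<in> sphere g r \<longleftrightarrow>
      fst p = c \<and> (snd g - snd p)^2 = r^2 - (fst g - c)^2" for p
  proof -
    have "p \<in> sphere g r \<longleftrightarrow> dist g p ^ 2 = r ^ 2"
      using assms by simp
    then show ?thesis
      unfolding dist_point_sq vline_def by auto
  qed
  have abs_iff: "\<bar>c - fst g\<bar> = r \<longleftrightarrow> (fst g - c)^2 = r^2"
    using assms by (metis abs_ge_zero abs_minus_commute power2_abs power2_eq_iff_nonneg)
  show ?thesis
  proof
    assume "tangent_line (vline c) (sphere g r)"
    then obtain p where p: "p \<in> vline c \<and> p \<in> sphere g r"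
      and unique: "\<And>q. q \<in> vline c \<and> q \<in> sphere g r \<Longrightarrow> q = p"
      unfolding tangent_line_def by blast
    \<comment> \<open>The mirror image of \<open>p\<close> in the horizontal diameter is also a common point.\<close>
    define q where "q = (c, 2 * snd g - snd p)"
    have "(snd g - snd q)^2 = (snd g - snd p)^2"
      unfolding q_def by (simp add: power2_commute)
    then have "q \<in> vline c \<and> q \<in> sphere g r"
      using p unfolding on_circle by (simp add: q_def)
    then have "snd q = snd p"
      using unique by simp
    then have "snd p = snd g"
      unfolding q_def by simp
    then show "\<bar>c - fst g\<bar> = r"
      using p unfolding on_circle abs_iff by simp
  next
    assume "\<bar>c - fst g\<bar> = r"
    then have "p \<in> vline c \<and> p \<in> sphere g r \<longleftrightarrow> p = (c, snd g)" for p
      unfolding on_circle abs_iff by (cases p) auto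
    then show "tangent_line (vline c) (sphere g r)"
      by (simp add: tangent_line_def)
  qed
qed

lemma equilateral_on_vlines_exists:
  fixes x1 x2 x3 :: real
  assumes "x1 \<noteq> x2"
  shows "\<exists>A1 A2 A3. equilateral A1 A2 A3 \<and> A1 \<in> vline x1 \<and> A2 \<in> vline x2 \<and> A3 \<in> vline x3"
proof -
  \<comment> \<open>\<open>A3 - A1\<close> is \<open>A2 - A1\<close> rotated by 60 degrees; \<open>y2\<close> is chosen so that the rotated
      point lands on the line \<open>x = x3\<close>.\<close>
  define y2 where "y2 = ((x2 - x1) - 2 * (x3 - x1)) / sqrt 3"
  define y3 where "y3 = sqrt 3 / 2 * (x2 - x1) + y2 / 2"
  define A1 A2 A3 :: point where "A1 = (x1, 0)" "A2 = (x2, y2)" "A3 = (x3, y3)"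
  have rotated_x3: "x3 - x1 = (x2 - x1) / 2 - sqrt 3 / 2 * y2"
    unfolding y2_def by (simp add: field_simps)
  have s3: "sqrt 3 ^ 2 = (3::real)"
    by simp
  have "dist A2 A1 ^ 2 = dist A3 A1 ^ 2"
    unfolding dist_point_sq A1_A2_A3_def fst_conv snd_conv rotated_x3 y3_def
    by (simp add: algebra_simps power2_eq_square) (simp add: s3[unfolded power2_eq_square] field_simps)
  moreover have "dist A2 A1 ^ 2 = dist A3 A2 ^ 2"
  proof -
    have x3_x2: "x3 - x2 = (x3 - x1) - (x2 - x1)"
      by simp
    show ?thesis
      unfolding dist_point_sq A1_A2_A3_def fst_conv snd_conv x3_x2 rotated_x3 y3_def
      by (simp add: algebra_simps power2_eq_square) (simp add: s3[unfolded power2_eq_square] field_simps)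
  qed
  ultimately have "equilateral A1 A2 A3"
    using assms by (simp add: equilateral_def dist_commute A1_A2_A3_def)
  then show ?thesis
    unfolding vline_def A1_A2_A3_def by force
qed

lemma fst_incenter_equilateral_on_vlines:
  assumes "equilateral A1 A2 A3" "A1 \<in> vline x1" "A2 \<in> vline x2" "A3 \<in> vline x3"
  shows "fst (incenter A1 A2 A3) = (x1 + x2 + x3) / 3"
  using incenter_equilateral[OF assms(1)] assms(2-4) by (simp add: vline_def)

lemma tangent_vline_incircle_equilateral_on_vlines_iff:
  assumes "equilateral A1 A2 A3" "A1 \<in> vline x1" "A2 \<in> vline x2" "A3 \<in> vline x3"
  shows "tangent_line (vline c) (incircle A1 A2 A3) \<longleftrightarrow>
           (c - (x1 + x2 + x3) / 3)^2 = ((x1 - x2)^2 + (x2 - x3)^2 + (x3 - x1)^2) / 18"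
proof -
  define r where "r = inradius A1 A2 A3"
  have "(x1 - x2)^2 + (x2 - x3)^2 + (x3 - x1)^2 = 3 / 2 * dist A1 A2 ^ 2"
    using equilateral_fst_diff_sq_sum[OF assms(1)] assms(2-4) by (simp add: vline_def)
  then have r_sq: "r^2 = ((x1 - x2)^2 + (x2 - x3)^2 + (x3 - x1)^2) / 18"
    using inradius_equilateral[OF assms(1)] unfolding r_def by simp
  have "0 \<le> r"
    by (simp add: r_def inradius_def tri_area_def)
  then have "tangent_line (vline c) (incircle A1 A2 A3) \<longleftrightarrow> \<bar>c - (x1 + x2 + x3) / 3\<bar> = r"
    unfolding incircle_def r_def fst_incenter_equilateral_on_vlines[OF assms, symmetric]
    by (rule tangent_vline_sphere_iff)
  also have "\<dots> \<longleftrightarrow> \<bar>c - (x1 + x2 + x3) / 3\<bar>^2 = r^2"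
    using abs_ge_zero \<open>0 \<le> r\<close> by (rule power2_eq_iff_nonneg[symmetric])
  finally show ?thesis
    unfolding r_sq by simp
qed

theorem mainTheorem1:
  fixes f :: "real poly" and x1 x2 x3 :: real
  assumes "degree f = 3"
    and "x1 \<noteq> x2" and "x1 \<noteq> x3" and "x2 \<noteq> x3"
    and "poly f x1 = 0" and "poly f x2 = 0" and "poly f x3 = 0"
  shows "(\<exists>A1 A2 A3. equilateral A1 A2 A3 \<and> A1 \<in> vline x1 \<and> A2 \<in> vline x2 \<and> A3 \<in> vline x3)
    \<and> (\<forall>A1 A2 A3. equilateral A1 A2 A3 \<and> A1 \<in> vline x1 \<and> A2 \<in> vline x2 \<and> A3 \<in> vline x3 \<longrightarrow>
          {c. tangent_line (vline c) (incircle A1 A2 A3)} = {c. poly (pderiv f) c = 0}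
        \<and> {c. incenter A1 A2 A3 \<in> vline c} = {c. poly (pderiv (pderiv f)) c = 0})"
proof -
  have "{c. tangent_line (vline c) (incircle A1 A2 A3)} = {c. poly (pderiv f) c = 0}
      \<and> {c. incenter A1 A2 A3 \<in> vline c} = {c. poly (pderiv (pderiv f)) c = 0}"
    if "equilateral A1 A2 A3 \<and> A1 \<in> vline x1 \<and> A2 \<in> vline x2 \<and> A3 \<in> vline x3" for A1 A2 A3
  proof -
    from that have triangle: "equilateral A1 A2 A3" "A1 \<in> vline x1" "A2 \<in> vline x2" "A3 \<in> vline x3"
      by simp_all
    show ?thesis
      using tangent_vline_incircle_equilateral_on_vlines_iff[OF triangle]
        fst_incenter_equilateral_on_vlines[OF triangle] cubic_roots_pderiv_eq_0_iff[OF assms]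
      by (auto simp: vline_def)
  qed
  with equilateral_on_vlines_exists[OF assms(2)] show ?thesis
    by blast
qed

end
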